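(* Let $G$ be a graph with a type-2A 1-planar drawing $D$, and let $S$ be a vertex-cut of $G$. Then: (i) for any two distinct components $F$ and $F'$ of $G-S$, if $ab\in E(F)$ and $cd$ is an edge with one endvertex in $S$ and the other in $V(F')$, then $ab$ and $cd$ do not cross in $D$; and (ii) any two edges belonging to distinct components of $G-S$ do not cross each other in $D$.
   Context: All drawings are good (no edge crosses itself, two edges cross at most once, adjacent edges do not cross). A drawing is 1-planar if every edge is crossed at most once. If edges $ab$ and $cd$ cross in a 1-planar drawing of $G$, the associated edges of this crossing are the edges of $G[\{a,b,c,d\}]$ other than $ab$ and $cd$. A 1-planar drawing is type-2A if every crossing has at least two associated edges, and every crossing with exactly two associated edges has these two edges disjoint. A vertex-cut is a set $S\subseteq V(G)$ with $G-S$ disconnected. *)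

theory Defs
  imports "HOL-Analysis.Analysis"
begin

definition simple_graph :: "'v set \<Rightarrow> 'v set set \<Rightarrow> bool" where
  "simple_graph V E \<longleftrightarrow> finite V \<and>
     (\<forall>e\<in>E. \<exists>u v. u \<noteq> v \<and> e = {u, v} \<and> u \<in> V \<and> v \<in> V)"

definition drawing :: "'v set \<Rightarrow> 'v set set \<Rightarrow> ('v \<Rightarrow> complex) \<Rightarrow> ('v set \<Rightarrow> real \<Rightarrow> complex) \<Rightarrow> bool" where
  "drawing V E pos crv \<longleftrightarrow> inj_on pos V \<and>
     (\<forall>e\<in>E. arc (crv e) \<and> {pathstart (crv e), pathfinish (crv e)} = pos ` e \<and>
             path_image (crv e) \<inter> pos ` V = pos ` e)"

definition inner_pts :: "('v set \<Rightarrow> real \<Rightarrow> complex) \<Rightarrow> 'v set \<Rightarrow> complex set" where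
  "inner_pts crv e = path_image (crv e) - {pathstart (crv e), pathfinish (crv e)}"

definition crosses :: "'v set set \<Rightarrow> ('v set \<Rightarrow> real \<Rightarrow> complex) \<Rightarrow> 'v set \<Rightarrow> 'v set \<Rightarrow> bool" where
  "crosses E crv e f \<longleftrightarrow> e \<in> E \<and> f \<in> E \<and> e \<noteq> f \<and> inner_pts crv e \<inter> inner_pts crv f \<noteq> {}"

definition good_drawing :: "'v set \<Rightarrow> 'v set set \<Rightarrow> ('v \<Rightarrow> complex) \<Rightarrow> ('v set \<Rightarrow> real \<Rightarrow> complex) \<Rightarrow> bool" where
  "good_drawing V E pos crv \<longleftrightarrow> drawing V E pos crv \<and>
     (\<forall>e\<in>E. \<forall>f\<in>E. e \<noteq> f \<longrightarrow>
        finite (inner_pts crv e \<inter> inner_pts crv f) \<and>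
        card (inner_pts crv e \<inter> inner_pts crv f) \<le> 1 \<and>
        (e \<inter> f \<noteq> {} \<longrightarrow> inner_pts crv e \<inter> inner_pts crv f = {}))"

text \<open>1-planar: every edge is crossed at most once (in a good drawing each crossing
  edge contributes exactly one crossing).\<close>
definition one_planar :: "'v set set \<Rightarrow> ('v set \<Rightarrow> real \<Rightarrow> complex) \<Rightarrow> bool" where
  "one_planar E crv \<longleftrightarrow> (\<forall>e\<in>E. finite {f. crosses E crv e f} \<and> card {f. crosses E crv e f} \<le> 1)"

definition assoc_edges :: "'v set set \<Rightarrow> 'v \<Rightarrow> 'v \<Rightarrow> 'v \<Rightarrow> 'v \<Rightarrow> 'v set set" where
  "assoc_edges E a b c d = {e \<in> E. e \<subseteq> {a, b, c, d} \<and> e \<noteq> {a, b} \<and> e \<noteq> {c, d}}"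

definition type_2A :: "'v set set \<Rightarrow> ('v set \<Rightarrow> real \<Rightarrow> complex) \<Rightarrow> bool" where
  "type_2A E crv \<longleftrightarrow> one_planar E crv \<and>
     (\<forall>a b c d. crosses E crv {a, b} {c, d} \<longrightarrow>
        card (assoc_edges E a b c d) \<ge> 2 \<and>
        (card (assoc_edges E a b c d) = 2 \<longrightarrow>
           (\<forall>e\<in>assoc_edges E a b c d. \<forall>e'\<in>assoc_edges E a b c d. e \<noteq> e' \<longrightarrow> e \<inter> e' = {})))"

definition adj_minus :: "'v set \<Rightarrow> 'v set set \<Rightarrow> 'v set \<Rightarrow> ('v \<times> 'v) set" where
  "adj_minus V E S = {(x, y). {x, y} \<in> E \<and> x \<in> V - S \<and> y \<in> V - S}"

definition component_minus :: "'v set \<Rightarrow> 'v set set \<Rightarrow> 'v set \<Rightarrow> 'v set \<Rightarrow> bool" where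
  "component_minus V E S C \<longleftrightarrow> (\<exists>u \<in> V - S. C = {v. (u, v) \<in> (adj_minus V E S)\<^sup>*})"

definition vertex_cut :: "'v set \<Rightarrow> 'v set set \<Rightarrow> 'v set \<Rightarrow> bool" where
  "vertex_cut V E S \<longleftrightarrow> S \<subseteq> V \<and>
     (\<exists>C1 C2. component_minus V E S C1 \<and> component_minus V E S C2 \<and> C1 \<noteq> C2)"

end

theory Submission
  imports Defs
begin

text \<open>No edge of \<open>G\<close> joins two distinct components of \<open>G - S\<close>. Hence if \<open>ab\<close> lies in \<open>F\<close>
  and \<open>cd\<close> crosses it with \<open>d\<close> in another component, the only candidates for associated edges
  are \<open>ac\<close> and \<open>bc\<close>: fewer than two, or exactly two sharing \<open>c\<close>, which type 2A forbids. If
  both edges lie in distinct components there is no associated edge at all.\<close>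

lemma simple_graph_edgeD:
  assumes "simple_graph V E" "e \<in> E"
  obtains u v where "u \<noteq> v" "e = {u, v}"
  using assms unfolding simple_graph_def by blast

lemma sym_adj_minus: "sym (adj_minus V E S)"
  by (rule symI) (simp add: adj_minus_def insert_commute)

lemma equiv_rtrancl_adj_minus: "equiv UNIV ((adj_minus V E S)\<^sup>*)"
  by (rule equivI) (simp_all add: refl_rtrancl sym_rtrancl[OF sym_adj_minus] trans_rtrancl)

lemma component_minus_in_quotient:
  assumes "component_minus V E S C"
  shows "C \<in> UNIV // (adj_minus V E S)\<^sup>*"
proof -
  from assms obtain u where "C = (adj_minus V E S)\<^sup>* `` {u}"
    unfolding component_minus_def by auto
  then show ?thesis by (simp add: quotientI)
qed

lemma component_minus_disjoint:
  assumes "component_minus V E S C" "component_minus V E S C'" "C \<noteq> C'"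
  shows "C \<inter> C' = {}"
  using quotient_disj[OF equiv_rtrancl_adj_minus component_minus_in_quotient[OF assms(1)]
      component_minus_in_quotient[OF assms(2)]] assms(3) by blast

lemma component_minus_subset:
  assumes "component_minus V E S C"
  shows "C \<subseteq> V - S"
proof
  fix x assume "x \<in> C"
  from assms obtain u where "u \<in> V - S" and C: "C = {v. (u, v) \<in> (adj_minus V E S)\<^sup>*}"
    unfolding component_minus_def by blast
  with \<open>x \<in> C\<close> have "(u, x) \<in> (adj_minus V E S)\<^sup>*" by simp
  then show "x \<in> V - S"
    by (cases rule: rtranclE) (use \<open>u \<in> V - S\<close> in \<open>auto simp: adj_minus_def\<close>)
qed

lemma component_minus_closed:
  assumes "component_minus V E S C" "x \<in> C" "(x, y) \<in> adj_minus V E S"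
  shows "y \<in> C"
proof -
  from assms(1) obtain u where C: "C = {v. (u, v) \<in> (adj_minus V E S)\<^sup>*}"
    unfolding component_minus_def by blast
  with assms(2,3) show ?thesis by (simp add: rtrancl_into_rtrancl)
qed

lemma no_edge_between_components:
  assumes C: "component_minus V E S C" and C': "component_minus V E S C'" and "C \<noteq> C'"
    and "x \<in> C" "y \<in> C'"
  shows "{x, y} \<notin> E"
proof
  assume "{x, y} \<in> E"
  moreover have "x \<in> V - S" "y \<in> V - S"
    using component_minus_subset[OF C] component_minus_subset[OF C'] \<open>x \<in> C\<close> \<open>y \<in> C'\<close>
    by auto
  ultimately have "(x, y) \<in> adj_minus V E S"
    by (simp add: adj_minus_def)
  with C \<open>x \<in> C\<close> have "y \<in> C"
    by (rule component_minus_closed)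
  with \<open>y \<in> C'\<close> component_minus_disjoint[OF C C' \<open>C \<noteq> C'\<close>] show False
    by blast
qed

lemma assoc_edges_subset:
  assumes "simple_graph V E"
  shows "assoc_edges E a b c d \<subseteq> E \<inter> {{a, c}, {a, d}, {b, c}, {b, d}}"
proof
  fix e assume e: "e \<in> assoc_edges E a b c d"
  then have "e \<in> E" by (simp add: assoc_edges_def)
  with assms obtain u v where uv: "u \<noteq> v" "e = {u, v}" by (rule simple_graph_edgeD)
  with e have "u = a \<or> u = b \<or> u = c \<or> u = d" "v = a \<or> v = b \<or> v = c \<or> v = d"
    by (auto simp: assoc_edges_def)
  then show "e \<in> E \<inter> {{a, c}, {a, d}, {b, c}, {b, d}}"
    using e uv unfolding assoc_edges_def by (elim disjE) (simp_all add: insert_commute)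
qed

lemma type_2A_crossingD:
  assumes "type_2A E crv" "crosses E crv {a, b} {c, d}"
  shows "2 \<le> card (assoc_edges E a b c d)"
    and "\<lbrakk>card (assoc_edges E a b c d) = 2; e \<in> assoc_edges E a b c d;
          e' \<in> assoc_edges E a b c d; e \<noteq> e'\<rbrakk> \<Longrightarrow> e \<inter> e' = {}"
  using assms(1)[unfolded type_2A_def, THEN conjunct2, rule_format, OF assms(2)] by simp_all

lemma type_2A_assoc_edges_not_at_one_vertex:
  assumes "type_2A E crv" "crosses E crv {a, b} {c, d}"
  shows "\<not> assoc_edges E a b c d \<subseteq> {{a, c}, {b, c}}"
proof
  let ?A = "assoc_edges E a b c d"
  assume sub: "?A \<subseteq> {{a, c}, {b, c}}"
  have fin: "finite {{a, c}, {b, c}}" by simp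
  have "2 \<le> card ?A"
    using type_2A_crossingD(1)[OF assms] .
  moreover have "card ?A \<le> card {{a, c}, {b, c}}"
    using card_mono[OF fin sub] .
  moreover have "card {{a, c}, {b, c}} \<le> 2"
    by (rule card_insert_le_m1) simp_all
  ultimately have two: "card ?A = 2" and "card {{a, c}, {b, c}} \<le> card ?A"
    by linarith+
  then have A: "?A = {{a, c}, {b, c}}"
    using card_seteq[OF fin sub] by blast
  have ne: "{a, c} \<noteq> {b, c}"
  proof
    assume "{a, c} = {b, c}"
    with A two show False by simp
  qed
  have "{a, c} \<in> ?A" "{b, c} \<in> ?A"
    using A by simp_all
  from type_2A_crossingD(2)[OF assms two this ne] show False
    by simp
qed

theorem lemma7:
  fixes V :: "'v set" and E :: "'v set set"
    and pos :: "'v \<Rightarrow> complex" and crv :: "'v set \<Rightarrow> real \<Rightarrow> complex"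
  assumes "simple_graph V E"
    and "good_drawing V E pos crv"
    and "type_2A E crv"
    and "vertex_cut V E S"
    and "component_minus V E S F" and "component_minus V E S F'" and "F \<noteq> F'"
  shows "(\<forall>a b c d. {a, b} \<in> E \<and> a \<in> F \<and> b \<in> F \<and> {c, d} \<in> E \<and> c \<in> S \<and> d \<in> F'
            \<longrightarrow> \<not> crosses E crv {a, b} {c, d})
       \<and> (\<forall>e f. e \<in> E \<and> e \<subseteq> F \<and> f \<in> E \<and> f \<subseteq> F' \<longrightarrow> \<not> crosses E crv e f)"
proof (intro conjI allI impI notI)
  fix a b c d
  assume "{a, b} \<in> E \<and> a \<in> F \<and> b \<in> F \<and> {c, d} \<in> E \<and> c \<in> S \<and> d \<in> F'"
    and cross: "crosses E crv {a, b} {c, d}"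
  then have "{a, d} \<notin> E" "{b, d} \<notin> E"
    by (simp_all add: no_edge_between_components[OF assms(5-7)])
  then have "assoc_edges E a b c d \<subseteq> {{a, c}, {b, c}}"
    using assoc_edges_subset[OF assms(1), of a b c d] by blast
  with type_2A_assoc_edges_not_at_one_vertex[OF assms(3) cross] show False ..
next
  fix e f
  assume ef: "e \<in> E \<and> e \<subseteq> F \<and> f \<in> E \<and> f \<subseteq> F'" and cross: "crosses E crv e f"
  then have "e \<in> E" "f \<in> E" by simp_all
  obtain a b where e: "e = {a, b}"
    using assms(1) \<open>e \<in> E\<close> by (rule simple_graph_edgeD)
  obtain c d where f: "f = {c, d}"
    using assms(1) \<open>f \<in> E\<close> by (rule simple_graph_edgeD)
  from ef have "a \<in> F" "b \<in> F" "c \<in> F'" "d \<in> F'"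
    unfolding e f by simp_all
  then have "{a, c} \<notin> E" "{a, d} \<notin> E" "{b, c} \<notin> E" "{b, d} \<notin> E"
    by (simp_all add: no_edge_between_components[OF assms(5-7)])
  then have "assoc_edges E a b c d = {}"
    using assoc_edges_subset[OF assms(1), of a b c d] by blast
  moreover have "2 \<le> card (assoc_edges E a b c d)"
    using type_2A_crossingD(1)[OF assms(3)] cross unfolding e f .
  ultimately show False by simp
qed

end
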